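(* Let $(\lambda_n)_{n\ge1}$ be positive reals and $(\nu_n)_{n\ge1}$ with $0<\nu_n\leq1$. Consider the system (governing the state probabilities of the state dependent fractional pure birth process) $$\partial_t^{\nu_n} p^{\nu_n}(n,t)=-\lambda_np^{\nu_n}(n,t)+\lambda_{n-1}p^{\nu_{n-1}}(n-1,t),\qquad n\geq 1,\ t\ge0,$$ with $p^{\nu_0}(0,t)=0$ for $t\ge0$, $p^{\nu_1}(1,0)=1$ and $p^{\nu_n}(n,0)=0$ for $n\geq 2$. The solution of this system is given by $$p^{\nu_n}(n,t)=(-1)^{n-1}\frac{\lambda_1}{\lambda_n}\sum_{k=n-1}^{\infty}(-1)^k\sum_{\Lambda^k_n}\frac{t^{\sum_{j=1}^nk_j\nu_j}\prod_{j=1}^n\lambda_j^{k_j}}{\Gamma\big(1+\sum_{j=1}^nk_j\nu_j\big)},\qquad n\geq1,$$ where $\Lambda^k_n=\{(k_1,k_2,\ldots,k_n):\ \sum_{j=1}^nk_j=k,\ k_1\in\mathbb{N}_0,\ k_j\in\mathbb{N}_0\setminus\{0\} \text{ for } 2\leq j\leq n\}$.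
   Context: $\mathbb{N}_0$ denotes the set of nonnegative integers. For $0<\nu<1$, $\partial_t^{\nu}f(t)=\frac{1}{\Gamma(1-\nu)}\int_0^t (t-s)^{-\nu}f'(s)\,\mathrm{d}s$ is the Caputo derivative, and $\partial_t^{1}f=f'$. *)

theory Defs
  imports "HOL-Analysis.Analysis"
begin

text \<open>Power t^e with the convention t^0 = 1 (also at t = 0); for e > 0, 0^e = 0.\<close>
definition tpow :: "real \<Rightarrow> real \<Rightarrow> real" where
  "tpow t e = (if e = 0 then 1 else t powr e)"

text \<open>Caputo derivative of order nu in (0,1], value D at time t > 0.
  For 0 < nu < 1: D = 1/Gamma(1-nu) * integral_0^t (t-s)^(-nu) f'(s) ds;
  for nu = 1: D = f'(t).\<close>
definition has_caputo_derivative :: "real \<Rightarrow> (real \<Rightarrow> real) \<Rightarrow> real \<Rightarrow> real \<Rightarrow> bool" where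
  "has_caputo_derivative nu f D t \<longleftrightarrow>
     (if nu = 1 then (f has_real_derivative D) (at t)
      else (\<forall>s\<in>{0<..<t}. f differentiable (at s)) \<and>
           ((\<lambda>s. (t - s) powr (- nu) * deriv f s) has_integral (Gamma (1 - nu) * D)) {0..t})"

text \<open>The index set Lambda^k_n: tuples (k_1,...,k_n), encoded as functions nat => nat
  supported in {1..n}, with sum k, k_j >= 1 for 2 <= j <= n.\<close>
definition Lambda_set :: "nat \<Rightarrow> nat \<Rightarrow> (nat \<Rightarrow> nat) set" where
  "Lambda_set n k = {\<kappa>. (\<forall>j. j \<notin> {1..n} \<longrightarrow> \<kappa> j = 0) \<and> (\<forall>j\<in>{2..n}. 1 \<le> \<kappa> j)
                        \<and> (\<Sum>j=1..n. \<kappa> j) = k}"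

definition fpb_inner :: "(nat \<Rightarrow> real) \<Rightarrow> (nat \<Rightarrow> real) \<Rightarrow> nat \<Rightarrow> nat \<Rightarrow> real \<Rightarrow> real" where
  "fpb_inner lam nu n k t =
     (\<Sum>\<kappa>\<in>Lambda_set n k.
        tpow t (\<Sum>j=1..n. real (\<kappa> j) * nu j) * (\<Prod>j=1..n. lam j ^ \<kappa> j)
        / Gamma (1 + (\<Sum>j=1..n. real (\<kappa> j) * nu j)))"

text \<open>m-th term of the series, corresponding to k = m + (n - 1).\<close>
definition fpb_term :: "(nat \<Rightarrow> real) \<Rightarrow> (nat \<Rightarrow> real) \<Rightarrow> nat \<Rightarrow> real \<Rightarrow> nat \<Rightarrow> real" where
  "fpb_term lam nu n t m = (-1) ^ (m + (n - 1)) * fpb_inner lam nu n (m + (n - 1)) t"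

definition fpb_sol :: "(nat \<Rightarrow> real) \<Rightarrow> (nat \<Rightarrow> real) \<Rightarrow> nat \<Rightarrow> real \<Rightarrow> real" where
  "fpb_sol lam nu n t =
     (if n = 0 then 0
      else (-1) ^ (n - 1) * (lam 1 / lam n) * (\<Sum>m. fpb_term lam nu n t m))"

end

theory Submission
  imports Defs
begin

(* Each term t^e / Gamma(1 + e) of the series has Caputo derivative t^(e - nu) / Gamma(1 + e - nu)
   of order nu (a Beta integral), so the order nu_n maps the exponent e + nu_n back to e.
   Since Gamma(1 + e) outgrows every exponential, the k-th block of the series is O(2^-k)
   uniformly on compact sets; this justifies termwise differentiation and, for nu < 1, termwise
   Caputo differentiation by dominated convergence. Removing one unit from k_n maps Lambda^(k+1)_n
   bijectively onto the disjoint union of Lambda^k_n and Lambda^k_(n-1), which turns the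
   differentiated series for p(n, t) into -lambda_n p(n, t) + lambda_(n-1) p(n-1, t). *)

lemma has_integral_powr_Beta:
  fixes t nu e :: real
  assumes t: "t > 0" and nu: "0 < nu" "nu < 1" and e: "e > 0"
  shows "((\<lambda>s. (t - s) powr (- nu) * s powr (e - 1)) has_integral
          t powr (e - nu) * Beta e (1 - nu)) {0..t}"
proof -
  have B: "((\<lambda>u. u powr (e - 1) * (1 - u) powr ((1 - nu) - 1)) has_integral Beta e (1 - nu)) (cbox 0 1)"
    using has_integral_Beta_real[of e "1 - nu"] e nu by simp
  have "((\<lambda>x. (\<lambda>u. u powr (e - 1) * (1 - u) powr ((1 - nu) - 1)) ((1/t) *\<^sub>R x + 0)) has_integral
        (1 / \<bar>1/t\<bar> ^ DIM(real)) *\<^sub>R Beta e (1 - nu))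
        ((\<lambda>x. (1 / (1/t)) *\<^sub>R x + - ((1 / (1/t)) *\<^sub>R 0)) ` cbox 0 1)"
    by (rule has_integral_affinity[OF B]) (use t in auto)
  moreover have "((\<lambda>x. (1 / (1/t)) *\<^sub>R x + - ((1 / (1/t)) *\<^sub>R 0)) ` cbox 0 1) = {0..t}"
    using t by (auto simp: image_def intro!: bexI[where x="_ / t"])
  ultimately have I: "((\<lambda>s. (s/t) powr (e - 1) * (1 - s/t) powr (- nu)) has_integral t * Beta e (1 - nu)) {0..t}"
    using t by simp
  have eq: "t powr (e - nu - 1) * ((s/t) powr (e - 1) * (1 - s/t) powr (- nu)) = (t - s) powr (- nu) * s powr (e - 1)"
    if "s \<in> {0<..<t}" for s
  proof -
    from that have s: "0 < s" "s < t" by auto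
    have "1 - s/t = (t - s) / t" using t by (simp add: field_simps)
    hence "(1 - s/t) powr (- nu) = (t - s) powr (-nu) / t powr (-nu)"
      using s t by (simp add: powr_divide)
    moreover have "(s/t) powr (e - 1) = s powr (e - 1) / t powr (e - 1)"
      using s t by (simp add: powr_divide)
    moreover have "t powr (1 + nu) = t * t powr nu" using t by (simp add: powr_add)
    ultimately show ?thesis using t s
      by (simp add: powr_diff powr_minus field_simps powr_add[symmetric])
  qed
  have "t powr (e - nu - 1) * (t * Beta e (1 - nu)) = t powr (e - nu) * Beta e (1 - nu)"
    using t by (simp add: powr_diff field_simps powr_add)
  with has_integral_mult_right[OF I, of "t powr (e - nu - 1)"]
  have "((\<lambda>s. t powr (e - nu - 1) * ((s/t) powr (e - 1) * (1 - s/t) powr (- nu))) has_integral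
     t powr (e - nu) * Beta e (1 - nu)) {0<..<t}"
    by (simp add: has_integral_Icc_iff_Ioo)
  hence "((\<lambda>s. (t - s) powr (- nu) * s powr (e - 1)) has_integral t powr (e - nu) * Beta e (1 - nu)) {0<..<t}"
    by (rule has_integral_spike_finite[of "{}", rotated 2]) (use eq in auto)
  thus ?thesis by (simp add: has_integral_Icc_iff_Ioo)
qed

lemma Gamma_one_plus_pos: "e \<ge> 0 \<Longrightarrow> Gamma (1 + e) > (0::real)"
  by (rule Gamma_real_pos) simp

lemma Gamma_one_plus: "e > 0 \<Longrightarrow> Gamma (1 + e) = e * Gamma (e::real)"
  using Gamma_plus1[of e] nonpos_Ints_nonpos[of e] by (auto simp: add.commute)

lemma Gamma_ge_powr_exp:
  fixes x R :: real
  assumes x: "x \<ge> 0" and R: "R > 0"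
  shows "R powr x * exp (-(R + 1)) \<le> Gamma (1 + x)"
proof -
  define f where "f = (\<lambda>s::real. s powr x / exp s)"
  have G: "(f has_integral Gamma (1 + x)) {0..}"
    using Gamma_integral_real[of "1 + x"] x by (simp add: f_def)
  have "continuous_on {R..R+1} (\<lambda>s::real. s powr x)"
    by (rule continuous_on_powr'[OF continuous_on_id continuous_on_const]) (use R in auto)
  hence "continuous_on {R..R+1} f"
    unfolding f_def by (intro continuous_on_divide continuous_on_exp continuous_on_id) auto
  hence I: "(f has_integral integral {R..R+1} f) {R..R+1}"
    by (intro integrable_integral integrable_continuous_real)
  have "integral {R..R+1} f \<le> Gamma (1 + x)"
    by (rule has_integral_subset_le[OF _ I G]) (use R in \<open>auto simp: f_def\<close>)
  moreover have "R powr x * exp (-(R + 1)) \<le> integral {R..R+1} f"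
  proof (rule has_integral_le[OF _ I])
    show "((\<lambda>s. R powr x * exp (-(R + 1))) has_integral R powr x * exp (-(R + 1))) {R..R+1}"
      using has_integral_const_real[of "R powr x * exp (-(R + 1))" R "R + 1"] by simp
    fix s assume s: "s \<in> {R..R+1}"
    have "R powr x \<le> s powr x" using s R x by (intro powr_mono2) auto
    moreover have "exp (-(R + 1)) \<le> inverse (exp s)" using s by (simp add: exp_minus[symmetric])
    ultimately show "R powr x * exp (-(R + 1)) \<le> f s"
      by (auto simp: f_def divide_inverse intro: mult_mono)
  qed
  ultimately show ?thesis by linarith
qed

section \<open>Fractional powers\<close>

definition frac_power :: "real \<Rightarrow> real \<Rightarrow> real" where
  "frac_power e t = tpow t e / Gamma (1 + e)"

definition frac_power_deriv :: "real \<Rightarrow> real \<Rightarrow> real" where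
  "frac_power_deriv e s = e * s powr (e - 1) / Gamma (1 + e)"

definition caputo_frac_power :: "real \<Rightarrow> real \<Rightarrow> real \<Rightarrow> real" where
  "caputo_frac_power nu e t = (if e = 0 then 0 else t powr (e - nu) / Gamma (1 + e - nu))"

lemma frac_power_pos: "T > 0 \<Longrightarrow> frac_power e T = T powr e / Gamma (1 + e)"
  by (simp add: frac_power_def tpow_def)

lemma frac_power_nonneg: "0 \<le> t \<Longrightarrow> 0 \<le> e \<Longrightarrow> 0 \<le> frac_power e t"
  using Gamma_one_plus_pos[of e] by (simp add: frac_power_def tpow_def)

lemma frac_power_zero: "frac_power e 0 = (if e = 0 then 1 else 0)"
  by (simp add: frac_power_def tpow_def)

lemma abs_frac_power_le:
  assumes "0 \<le> t" "t \<le> T" "0 \<le> e"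
  shows "\<bar>frac_power e t\<bar> \<le> frac_power e T"
proof -
  have "\<bar>tpow t e\<bar> \<le> tpow T e"
    using assms by (auto simp: tpow_def intro: powr_mono2)
  thus ?thesis
    using Gamma_one_plus_pos[OF assms(3)] by (simp add: frac_power_def divide_right_mono)
qed

lemma continuous_on_frac_power: "e \<ge> 0 \<Longrightarrow> continuous_on {0..} (frac_power e)"
  unfolding frac_power_def tpow_def
  by (cases "e = 0") (auto intro!: continuous_on_divide continuous_on_powr' simp: Gamma_one_plus_pos less_imp_neq[symmetric])

lemma has_real_derivative_frac_power:
  assumes "s > 0" "e \<ge> 0"
  shows "(frac_power e has_real_derivative frac_power_deriv e s) (at s)"
proof (cases "e = 0")
  case True
  then have "frac_power e = (\<lambda>t. 1)" by (auto simp: frac_power_def tpow_def)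
  then show ?thesis using True by (simp add: frac_power_deriv_def)
next
  case False
  then have "frac_power e = (\<lambda>t. t powr e / Gamma (1 + e))"
    by (auto simp: frac_power_def tpow_def)
  moreover have "Gamma (1 + e) \<noteq> 0" using Gamma_one_plus_pos[OF assms(2)] by simp
  ultimately show ?thesis
    using assms by (auto simp: frac_power_deriv_def intro!: derivative_eq_intros)
qed

lemma frac_power_deriv_eq_caputo_one:
  "e \<ge> 0 \<Longrightarrow> frac_power_deriv e s = caputo_frac_power 1 e s"
  using Gamma_one_plus[of e] by (cases "e = 0") (auto simp: frac_power_deriv_def caputo_frac_power_def)

lemma caputo_frac_power_add_order:
  "t > 0 \<Longrightarrow> e \<ge> 0 \<Longrightarrow> nu > 0 \<Longrightarrow> caputo_frac_power nu (e + nu) t = frac_power e t"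
  by (auto simp: caputo_frac_power_def frac_power_def tpow_def add.assoc)

lemma has_integral_caputo_frac_power:
  assumes t: "t > 0" and nu: "0 < nu" "nu < 1" and e: "e \<ge> 0"
  shows "((\<lambda>s. (t - s) powr (- nu) * frac_power_deriv e s) has_integral
           Gamma (1 - nu) * caputo_frac_power nu e t) {0..t}"
proof (cases "e = 0")
  case True
  then show ?thesis by (simp add: frac_power_deriv_def caputo_frac_power_def)
next
  case False
  with e have e: "e > 0" by simp
  have "Gamma e \<noteq> 0" using Gamma_real_pos[OF e] by linarith
  then have "(e / Gamma (1 + e)) * (t powr (e - nu) * Beta e (1 - nu)) = Gamma (1 - nu) * caputo_frac_power nu e t"
    using e by (simp add: Gamma_one_plus Beta_def caputo_frac_power_def add_diff_eq add.commute)
  then show ?thesis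
    using has_integral_mult_right[OF has_integral_powr_Beta[OF t nu e], of "e / Gamma (1 + e)"]
    by (simp add: frac_power_deriv_def mult_ac)
qed

lemma abs_frac_power_deriv_le:
  assumes "0 < a" "a \<le> s" "s \<le> b" "e \<ge> 0"
  shows "\<bar>frac_power_deriv e s\<bar> \<le> frac_power e (exp 1 * b) / a"
proof -
  have s: "s > 0" using assms by simp
  have "e * s powr (e - 1) = e * (s powr e / s)" using s by (simp add: powr_diff)
  also have "\<dots> \<le> exp e * (b powr e / a)"
  proof (rule mult_mono)
    show "e \<le> exp e" using exp_ge_add_one_self[of e] by linarith
    show "s powr e / s \<le> b powr e / a"
      by (rule frac_le) (use assms s in \<open>auto intro: powr_mono2\<close>)
  qed (use assms in auto)
  also have "\<dots> = (exp 1 * b) powr e / a"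
    using assms by (simp add: powr_mult exp_powr_real)
  finally have "e * s powr (e - 1) / Gamma (1 + e) \<le> (exp 1 * b) powr e / a / Gamma (1 + e)"
    using Gamma_one_plus_pos[of e] assms by (intro divide_right_mono) auto
  then show ?thesis
    using assms by (simp add: frac_power_deriv_def frac_power_pos abs_mult mult.commute)
qed

text \<open>The weight \<open>s powr (ez - 1)\<close> is integrable against the Caputo kernel.\<close>
lemma abs_frac_power_deriv_le_powr:
  assumes s: "0 < s" "s \<le> t" and ez: "ez > 0" and e: "e = 0 \<or> ez \<le> e" "e \<ge> 0"
  shows "\<bar>frac_power_deriv e s\<bar> \<le> s powr (ez - 1) * frac_power e (exp 1 * max 1 t)"
proof (cases "e = 0")
  case True
  then show ?thesis by (simp add: frac_power_deriv_def frac_power_nonneg)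
next
  case False
  with e have le: "ez \<le> e" "e > 0" by auto
  define M where "M = max 1 t"
  have M: "M \<ge> 1" "s \<le> M" using s by (auto simp: M_def)
  have "s powr (e - 1) = s powr (ez - 1) * s powr (e - ez)"
    using s by (simp add: powr_add[symmetric])
  also have "\<dots> \<le> s powr (ez - 1) * M powr e"
  proof (rule mult_left_mono)
    have "s powr (e - ez) \<le> M powr (e - ez)" using le s M by (intro powr_mono2) auto
    also have "\<dots> \<le> M powr e" using le M ez by (intro powr_mono) auto
    finally show "s powr (e - ez) \<le> M powr e" .
  qed simp
  moreover have "e \<le> exp e" using exp_ge_add_one_self[of e] by linarith
  ultimately have "e * s powr (e - 1) \<le> exp e * (s powr (ez - 1) * M powr e)"
    using le by (intro mult_mono) auto
  also have "\<dots> = s powr (ez - 1) * (exp 1 * M) powr e"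
    using M by (simp add: powr_mult exp_powr_real)
  finally have "e * s powr (e - 1) / Gamma (1 + e) \<le> s powr (ez - 1) * (exp 1 * M) powr e / Gamma (1 + e)"
    using Gamma_one_plus_pos[of e] le by (intro divide_right_mono) auto
  then show ?thesis
    using le M by (simp add: frac_power_deriv_def frac_power_pos abs_mult M_def)
qed

lemma frac_power_le_geometric:
  fixes T R a e :: real
  assumes T: "T > 0" and R: "R \<ge> 1" and e: "0 \<le> a" "a * real k \<le> e" "e \<le> real k"
  shows "frac_power e T \<le> exp (R + 1) * (max 1 T / R powr a) ^ k"
proof -
  have e0: "e \<ge> 0" using e by (meson order.trans mult_nonneg_nonneg of_nat_0_le_iff)
  have Gpos: "Gamma (1 + e) > 0" using e0 by (rule Gamma_one_plus_pos)
  have "R powr e * exp (-(R + 1)) \<le> Gamma (1 + e)" using Gamma_ge_powr_exp[OF e0] R by simp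
  then have "1 / Gamma (1 + e) \<le> 1 / (R powr e * exp (-(R + 1)))"
    using R Gpos by (intro divide_left_mono mult_pos_pos) auto
  also have "\<dots> = exp (R + 1) * R powr (- e)"
    using R by (simp add: powr_minus exp_minus field_simps flip: exp_add)
  also have "\<dots> \<le> exp (R + 1) * R powr (- (a * real k))"
    using R e by (intro mult_left_mono powr_mono) auto
  finally have inv_Gamma: "1 / Gamma (1 + e) \<le> exp (R + 1) * R powr (- (a * real k))" .
  have "T powr e \<le> max 1 T powr e" using T e0 by (intro powr_mono2) auto
  also have "\<dots> \<le> max 1 T powr real k" using e by (intro powr_mono) auto
  finally have "T powr e \<le> max 1 T ^ k" by (simp add: powr_realpow)
  then have "frac_power e T \<le> max 1 T ^ k * (exp (R + 1) * R powr (- (a * real k)))"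
    unfolding frac_power_pos[OF T] divide_inverse
    using inv_Gamma Gpos by (intro mult_mono) (auto simp: divide_inverse)
  also have "R powr (- (a * real k)) = inverse ((R powr a) ^ k)"
    using R by (simp add: powr_minus powr_powr powr_realpow[symmetric] mult.commute)
  finally show ?thesis by (simp add: divide_inverse power_mult_distrib power_inverse mult_ac)
qed

lemma has_caputo_derivative_cmult:
  assumes "has_caputo_derivative nu f D t"
  shows "has_caputo_derivative nu (\<lambda>s. a * f s) (a * D) t"
proof (cases "nu = 1")
  case True
  then show ?thesis using assms by (simp add: has_caputo_derivative_def DERIV_cmult)
next
  case False
  then have diff: "\<forall>s\<in>{0<..<t}. f differentiable (at s)"
    and I: "((\<lambda>s. (t - s) powr (- nu) * deriv f s) has_integral Gamma (1 - nu) * D) {0..t}"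
    using assms by (auto simp: has_caputo_derivative_def)
  have "deriv (\<lambda>s. a * f s) s = a * deriv f s" if "s \<in> {0<..<t}" for s
    using diff that by (intro DERIV_imp_deriv DERIV_cmult) (simp add: DERIV_deriv_iff_real_differentiable)
  moreover have "((\<lambda>s. a * ((t - s) powr (- nu) * deriv f s)) has_integral a * (Gamma (1 - nu) * D)) {0<..<t}"
    using has_integral_mult_right[OF I] by (simp add: has_integral_Icc_iff_Ioo)
  ultimately have "((\<lambda>s. (t - s) powr (- nu) * deriv (\<lambda>s. a * f s) s) has_integral Gamma (1 - nu) * (a * D)) {0<..<t}"
    by (subst has_integral_cong[symmetric]) (auto simp: mult_ac)
  then show ?thesis
    using False diff by (simp add: has_caputo_derivative_def has_integral_Icc_iff_Ioo)
qed

section \<open>Series of fractional powers\<close>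

context
  fixes A :: "nat \<Rightarrow> 'a set" and c e :: "'a \<Rightarrow> real"
  assumes finite_blocks: "\<And>m. finite (A m)"
    and exponent_nonneg: "\<And>m i. i \<in> A m \<Longrightarrow> 0 \<le> e i"
    and abs_summable: "\<And>T. T > 0 \<Longrightarrow> summable (\<lambda>m. \<Sum>i\<in>A m. \<bar>c i\<bar> * frac_power (e i) T)"
begin

lemma abs_block_le:
  assumes "0 \<le> t" "t \<le> T"
  shows "\<bar>\<Sum>i\<in>A m. c i * frac_power (e i) t\<bar> \<le> (\<Sum>i\<in>A m. \<bar>c i\<bar> * frac_power (e i) T)"
proof -
  have "\<bar>\<Sum>i\<in>A m. c i * frac_power (e i) t\<bar> \<le> (\<Sum>i\<in>A m. \<bar>c i\<bar> * \<bar>frac_power (e i) t\<bar>)"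
    using sum_abs[of "\<lambda>i. c i * frac_power (e i) t"] by (simp add: abs_mult)
  also have "\<dots> \<le> (\<Sum>i\<in>A m. \<bar>c i\<bar> * frac_power (e i) T)"
    using assms exponent_nonneg by (intro sum_mono mult_left_mono abs_frac_power_le) auto
  finally show ?thesis .
qed

lemma summable_frac_power_series:
  "t \<ge> 0 \<Longrightarrow> summable (\<lambda>m. \<Sum>i\<in>A m. c i * frac_power (e i) t)"
  by (rule summable_comparison_test[OF _ abs_summable[of "t + 1"]]) (auto intro!: abs_block_le)

lemma continuous_on_Icc_frac_power_series:
  assumes "T > 0"
  shows "continuous_on {0..T} (\<lambda>t. \<Sum>m. \<Sum>i\<in>A m. c i * frac_power (e i) t)"
proof (rule uniform_limit_theorem)
  show "uniform_limit {0..T} (\<lambda>n t. \<Sum>m<n. \<Sum>i\<in>A m. c i * frac_power (e i) t)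
     (\<lambda>t. \<Sum>m. \<Sum>i\<in>A m. c i * frac_power (e i) t) sequentially"
    by (rule Weierstrass_m_test[OF _ abs_summable[OF assms]]) (auto intro!: abs_block_le)
  have "continuous_on {0..T} (frac_power (e i))" if "i \<in> A m" for m i
    using continuous_on_frac_power[OF exponent_nonneg[OF that]] by (rule continuous_on_subset) auto
  then show "\<forall>\<^sub>F n in sequentially. continuous_on {0..T} (\<lambda>t. \<Sum>m<n. \<Sum>i\<in>A m. c i * frac_power (e i) t)"
    by (intro always_eventually allI continuous_on_sum ballI continuous_on_mult continuous_on_const) blast
qed simp

lemma continuous_on_frac_power_series:
  "continuous_on {0..} (\<lambda>t. \<Sum>m. \<Sum>i\<in>A m. c i * frac_power (e i) t)"
proof (subst continuous_on_eq_continuous_within, intro ballI)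
  fix x :: real assume x: "x \<in> {0..}"
  have "continuous (at x within {0..x+1}) (\<lambda>t. \<Sum>m. \<Sum>i\<in>A m. c i * frac_power (e i) t)"
    using continuous_on_Icc_frac_power_series[of "x + 1"] x
    by (simp add: continuous_on_eq_continuous_within)
  moreover have "at x within {0..x+1} = at x within {0..}"
    by (rule at_within_nhd[of _ "{..<x+1}"]) auto
  ultimately show "continuous (at x within {0..}) (\<lambda>t. \<Sum>m. \<Sum>i\<in>A m. c i * frac_power (e i) t)"
    by simp
qed

lemma abs_deriv_block_le:
  assumes "0 < a" "a \<le> s" "s \<le> b"
  shows "\<bar>\<Sum>i\<in>A m. c i * frac_power_deriv (e i) s\<bar>
           \<le> (\<Sum>i\<in>A m. \<bar>c i\<bar> * frac_power (e i) (exp 1 * b)) / a"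
proof -
  have "\<bar>\<Sum>i\<in>A m. c i * frac_power_deriv (e i) s\<bar> \<le> (\<Sum>i\<in>A m. \<bar>c i\<bar> * \<bar>frac_power_deriv (e i) s\<bar>)"
    using sum_abs[of "\<lambda>i. c i * frac_power_deriv (e i) s"] by (simp add: abs_mult)
  also have "\<dots> \<le> (\<Sum>i\<in>A m. \<bar>c i\<bar> * (frac_power (e i) (exp 1 * b) / a))"
    using assms exponent_nonneg by (intro sum_mono mult_left_mono abs_frac_power_deriv_le) auto
  finally show ?thesis by (simp add: sum_divide_distrib)
qed

lemma has_real_derivative_frac_power_block:
  "y > 0 \<Longrightarrow> ((\<lambda>t. \<Sum>i\<in>A m. c i * frac_power (e i) t) has_real_derivative
                 (\<Sum>i\<in>A m. c i * frac_power_deriv (e i) y)) (at y)"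
  by (intro DERIV_sum DERIV_cmult has_real_derivative_frac_power exponent_nonneg)

lemma
  assumes x: "x > 0"
  shows summable_frac_power_deriv_series: "summable (\<lambda>m. \<Sum>i\<in>A m. c i * frac_power_deriv (e i) x)"
    and has_real_derivative_frac_power_series:
      "((\<lambda>t. \<Sum>m. \<Sum>i\<in>A m. c i * frac_power (e i) t) has_real_derivative
           (\<Sum>m. \<Sum>i\<in>A m. c i * frac_power_deriv (e i) x)) (at x)"
proof -
  define S where "S = {x/2<..<x+1}"
  define M where "M = (\<lambda>m. (\<Sum>i\<in>A m. \<bar>c i\<bar> * frac_power (e i) (exp 1 * (x + 1))) / (x / 2))"
  have xS: "x \<in> S" and oS: "open S" using x by (auto simp: S_def)
  have sM: "summable M"
    unfolding M_def using x by (intro summable_divide abs_summable) simp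
  have bound: "\<bar>\<Sum>i\<in>A m. c i * frac_power_deriv (e i) y\<bar> \<le> M m" if "y \<in> S" for m y
    unfolding M_def by (rule abs_deriv_block_le) (use that x in \<open>auto simp: S_def\<close>)
  show "summable (\<lambda>m. \<Sum>i\<in>A m. c i * frac_power_deriv (e i) x)"
    by (rule summable_comparison_test[OF _ sM]) (use bound xS in auto)
  have U: "uniform_limit S (\<lambda>n y. \<Sum>m<n. \<Sum>i\<in>A m. c i * frac_power_deriv (e i) y)
      (\<lambda>y. \<Sum>m. \<Sum>i\<in>A m. c i * frac_power_deriv (e i) y) sequentially"
    by (rule Weierstrass_m_test[OF _ sM]) (use bound in auto)
  have D: "((\<lambda>t. \<Sum>i\<in>A n. c i * frac_power (e i) t) has_field_derivative
             (\<Sum>i\<in>A n. c i * frac_power_deriv (e i) y)) (at y within S)" if "y \<in> S" for n y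
    by (rule has_field_derivative_at_within[OF has_real_derivative_frac_power_block])
      (use that x in \<open>auto simp: S_def\<close>)
  obtain g where g: "\<forall>y\<in>S. (\<lambda>n. \<Sum>i\<in>A n. c i * frac_power (e i) y) sums g y \<and>
      (g has_field_derivative (\<Sum>m. \<Sum>i\<in>A m. c i * frac_power_deriv (e i) y)) (at y within S)"
    using has_field_derivative_series[OF _ D U xS summable_frac_power_series[of x]] x
    by (auto simp: S_def)
  then have "(g has_field_derivative (\<Sum>m. \<Sum>i\<in>A m. c i * frac_power_deriv (e i) x)) (at x)"
    using xS at_within_open[OF xS oS] by force
  then show "((\<lambda>t. \<Sum>m. \<Sum>i\<in>A m. c i * frac_power (e i) t) has_real_derivative
           (\<Sum>m. \<Sum>i\<in>A m. c i * frac_power_deriv (e i) x)) (at x)"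
    by (rule has_field_derivative_transform_within_open[OF _ oS xS]) (use g in \<open>simp add: sums_iff\<close>)
qed

lemma has_integral_caputo_partial_sum:
  assumes t: "t > 0" and nu: "0 < nu" "nu < 1"
  shows "((\<lambda>s. (t - s) powr (- nu) * (\<Sum>m<N. \<Sum>i\<in>A m. c i * frac_power_deriv (e i) s)) has_integral
          Gamma (1 - nu) * (\<Sum>m<N. \<Sum>i\<in>A m. c i * caputo_frac_power nu (e i) t)) {0<..<t}"
proof -
  have "((\<lambda>s. \<Sum>m<N. \<Sum>i\<in>A m. c i * ((t - s) powr (- nu) * frac_power_deriv (e i) s)) has_integral
        (\<Sum>m<N. \<Sum>i\<in>A m. c i * (Gamma (1 - nu) * caputo_frac_power nu (e i) t))) {0..t}"
    by (intro has_integral_sum finite_lessThan finite_blocks has_integral_mult_right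
          has_integral_caputo_frac_power t nu exponent_nonneg)
  then show ?thesis
    by (simp add: has_integral_Icc_iff_Ioo sum_distrib_left mult.left_commute)
qed

lemma abs_deriv_partial_sum_le:
  assumes s: "0 < s" "s \<le> t" and ez: "ez > 0"
    and ez_le: "\<And>m i. i \<in> A m \<Longrightarrow> e i = 0 \<or> ez \<le> e i"
  shows "\<bar>\<Sum>m<N. \<Sum>i\<in>A m. c i * frac_power_deriv (e i) s\<bar>
           \<le> s powr (ez - 1) * (\<Sum>m. \<Sum>i\<in>A m. \<bar>c i\<bar> * frac_power (e i) (exp 1 * max 1 t))"
proof -
  let ?M = "exp 1 * max 1 t"
  have "\<bar>\<Sum>m<N. \<Sum>i\<in>A m. c i * frac_power_deriv (e i) s\<bar>
          \<le> (\<Sum>m<N. \<Sum>i\<in>A m. \<bar>c i * frac_power_deriv (e i) s\<bar>)"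
    by (rule order.trans[OF sum_abs sum_mono[OF sum_abs]])
  also have "\<dots> \<le> (\<Sum>m<N. \<Sum>i\<in>A m. \<bar>c i\<bar> * (s powr (ez - 1) * frac_power (e i) ?M))"
    unfolding abs_mult using s ez ez_le exponent_nonneg
    by (intro sum_mono mult_left_mono abs_frac_power_deriv_le_powr) auto
  also have "\<dots> = s powr (ez - 1) * (\<Sum>m<N. \<Sum>i\<in>A m. \<bar>c i\<bar> * frac_power (e i) ?M)"
    by (simp add: sum_distrib_left mult.left_commute)
  also have "\<dots> \<le> s powr (ez - 1) * (\<Sum>m. \<Sum>i\<in>A m. \<bar>c i\<bar> * frac_power (e i) ?M)"
    using abs_summable[of ?M] exponent_nonneg
    by (intro mult_left_mono sum_le_suminf sum_nonneg mult_nonneg_nonneg frac_power_nonneg) auto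
  finally show ?thesis .
qed

lemma has_integral_caputo_frac_power_series:
  assumes nu: "0 < nu" "nu < 1" and ez: "ez > 0"
    and ez_le: "\<And>m i. i \<in> A m \<Longrightarrow> e i = 0 \<or> ez \<le> e i" and t: "t > 0"
  shows "((\<lambda>s. (t - s) powr (- nu) * (\<Sum>m. \<Sum>i\<in>A m. c i * frac_power_deriv (e i) s)) has_integral
           Gamma (1 - nu) * (\<Sum>m. \<Sum>i\<in>A m. c i * caputo_frac_power nu (e i) t)) {0<..<t}"
proof -
  define P where "P = (\<lambda>N. \<Sum>m<N. \<Sum>i\<in>A m. c i * caputo_frac_power nu (e i) t)"
  define f where "f = (\<lambda>N s. (t - s) powr (- nu) * (\<Sum>m<N. \<Sum>i\<in>A m. c i * frac_power_deriv (e i) s))"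
  define g where "g = (\<lambda>s. (t - s) powr (- nu) * (\<Sum>m. \<Sum>i\<in>A m. c i * frac_power_deriv (e i) s))"
  define K where "K = (\<Sum>m. \<Sum>i\<in>A m. \<bar>c i\<bar> * frac_power (e i) (exp 1 * max 1 t))"
  have fint: "(f N has_integral Gamma (1 - nu) * P N) {0<..<t}" for N
    unfolding f_def P_def using t nu by (rule has_integral_caputo_partial_sum)
  have "((\<lambda>s. K * ((t - s) powr (- nu) * s powr (ez - 1))) has_integral
          K * (t powr (ez - nu) * Beta ez (1 - nu))) {0<..<t}"
    using has_integral_mult_right[OF has_integral_powr_Beta[OF t nu ez]]
    by (simp add: has_integral_Icc_iff_Ioo)
  then have hint: "(\<lambda>s. K * ((t - s) powr (- nu) * s powr (ez - 1))) integrable_on {0<..<t}" ..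
  have bound: "norm (f N s) \<le> K * ((t - s) powr (- nu) * s powr (ez - 1))" if "s \<in> {0<..<t}" for N s
  proof -
    have "\<bar>\<Sum>m<N. \<Sum>i\<in>A m. c i * frac_power_deriv (e i) s\<bar> \<le> s powr (ez - 1) * K"
      using abs_deriv_partial_sum_le[OF _ _ ez ez_le, where s=s and t=t and N=N] that by (simp add: K_def)
    then have "(t - s) powr (- nu) * \<bar>\<Sum>m<N. \<Sum>i\<in>A m. c i * frac_power_deriv (e i) s\<bar>
                 \<le> (t - s) powr (- nu) * (s powr (ez - 1) * K)"
      by (rule mult_left_mono) simp
    then show ?thesis by (simp add: f_def abs_mult mult_ac)
  qed
  have conv: "(\<lambda>N. f N s) \<longlonglongrightarrow> g s" if "s \<in> {0<..<t}" for s
    using that unfolding f_def g_def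
    by (auto intro!: tendsto_mult_left summable_LIMSEQ summable_frac_power_deriv_series)
  have fi: "f N integrable_on {0<..<t}" for N using fint[of N] by (rule has_integral_integrable)
  have gi: "g integrable_on {0<..<t}" and lim: "(\<lambda>N. integral {0<..<t} (f N)) \<longlonglongrightarrow> integral {0<..<t} g"
    using dominated_convergence[OF fi hint bound conv] by auto
  have G: "Gamma (1 - nu) \<noteq> 0" using Gamma_real_pos[of "1 - nu"] nu by linarith
  from lim have "(\<lambda>N. Gamma (1 - nu) * P N / Gamma (1 - nu)) \<longlonglongrightarrow> integral {0<..<t} g / Gamma (1 - nu)"
    unfolding integral_unique[OF fint] by (intro tendsto_divide tendsto_const G)
  then have "P \<longlonglongrightarrow> integral {0<..<t} g / Gamma (1 - nu)" using G by simp
  then have "(\<Sum>m. \<Sum>i\<in>A m. c i * caputo_frac_power nu (e i) t) = integral {0<..<t} g / Gamma (1 - nu)"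
    unfolding P_def by (intro sums_unique[symmetric]) (simp add: sums_def)
  then show ?thesis
    using integrable_integral[OF gi] G by (simp add: g_def)
qed

lemma has_caputo_derivative_frac_power_series:
  assumes nu: "0 < nu" "nu \<le> 1" and ez: "ez > 0"
    and ez_le: "\<And>m i. i \<in> A m \<Longrightarrow> e i = 0 \<or> ez \<le> e i" and t: "t > 0"
  shows "has_caputo_derivative nu (\<lambda>t. \<Sum>m. \<Sum>i\<in>A m. c i * frac_power (e i) t)
           (\<Sum>m. \<Sum>i\<in>A m. c i * caputo_frac_power nu (e i) t) t"
proof (cases "nu = 1")
  case True
  have "(\<lambda>m. \<Sum>i\<in>A m. c i * caputo_frac_power nu (e i) t) = (\<lambda>m. \<Sum>i\<in>A m. c i * frac_power_deriv (e i) t)"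
    using True exponent_nonneg by (auto intro!: sum.cong simp: frac_power_deriv_eq_caputo_one)
  then show ?thesis
    using True has_real_derivative_frac_power_series[OF t] by (simp add: has_caputo_derivative_def)
next
  case False
  define F where "F = (\<lambda>t. \<Sum>m. \<Sum>i\<in>A m. c i * frac_power (e i) t)"
  have dF: "(F has_real_derivative (\<Sum>m. \<Sum>i\<in>A m. c i * frac_power_deriv (e i) s)) (at s)" if "s > 0" for s
    unfolding F_def using that by (rule has_real_derivative_frac_power_series)
  then have "\<forall>s\<in>{0<..<t}. F differentiable (at s)"
    unfolding real_differentiable_def by (meson greaterThanLessThan_iff)
  moreover have "((\<lambda>s. (t - s) powr (- nu) * deriv F s) has_integral
                   Gamma (1 - nu) * (\<Sum>m. \<Sum>i\<in>A m. c i * caputo_frac_power nu (e i) t)) {0<..<t}"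
    using has_integral_caputo_frac_power_series[OF nu(1) _ ez ez_le t] False nu(2)
    by (subst has_integral_cong[where g = "\<lambda>s. (t - s) powr (- nu) * (\<Sum>m. \<Sum>i\<in>A m. c i * frac_power_deriv (e i) s)"])
       (auto intro: DERIV_imp_deriv dF)
  ultimately show ?thesis
    using False unfolding F_def[symmetric] has_caputo_derivative_def by (simp add: has_integral_Icc_iff_Ioo)
qed
end

section \<open>The index sets\<close>

lemma sum_atLeastAtMost_update_last:
  fixes f :: "nat \<Rightarrow> 'c \<Rightarrow> 'b::comm_monoid_add"
  assumes "n \<ge> 1"
  shows "(\<Sum>j=1..n. f j ((\<kappa>(n := v)) j)) = (\<Sum>j=1..n-1. f j (\<kappa> j)) + f n v"
  using assms by (cases n) (auto simp: sum.cl_ivl_Suc intro!: sum.cong)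

lemma prod_atLeastAtMost_update_last:
  fixes f :: "nat \<Rightarrow> 'c \<Rightarrow> 'b::comm_monoid_mult"
  assumes "n \<ge> 1"
  shows "(\<Prod>j=1..n. f j ((\<kappa>(n := v)) j)) = (\<Prod>j=1..n-1. f j (\<kappa> j)) * f n v"
  using assms by (cases n) (auto simp: prod.cl_ivl_Suc intro!: prod.cong)

lemma sum_atLeastAtMost_last:
  fixes \<kappa> :: "nat \<Rightarrow> 'b::comm_monoid_add"
  shows "n \<ge> 1 \<Longrightarrow> (\<Sum>j=1..n. \<kappa> j) = (\<Sum>j=1..n-1. \<kappa> j) + \<kappa> n"
  using sum_atLeastAtMost_update_last[of n "\<lambda>_ x. x" \<kappa> "\<kappa> n"] by simp

lemma Lambda_setD:
  assumes "\<kappa> \<in> Lambda_set n k"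
  shows "\<And>j. j \<notin> {1..n} \<Longrightarrow> \<kappa> j = 0" "\<And>j. j \<in> {2..n} \<Longrightarrow> 1 \<le> \<kappa> j" "(\<Sum>j=1..n. \<kappa> j) = k"
  using assms by (auto simp: Lambda_set_def)

lemma finite_Lambda_set: "finite (Lambda_set n k)"
  and card_Lambda_set_le: "card (Lambda_set n k) \<le> (k + 1) ^ n"
proof -
  have inj: "inj_on (\<lambda>\<kappa>. restrict \<kappa> {1..n}) (Lambda_set n k)"
  proof (rule inj_onI)
    fix x y assume x: "x \<in> Lambda_set n k" and y: "y \<in> Lambda_set n k"
      and eq: "restrict x {1..n} = restrict y {1..n}"
    show "x = y"
    proof
      fix j show "x j = y j"
        using fun_cong[OF eq, of j] Lambda_setD(1)[OF x, of j] Lambda_setD(1)[OF y, of j]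
        by (cases "j \<in> {1..n}") auto
    qed
  qed
  have sub: "(\<lambda>\<kappa>. restrict \<kappa> {1..n}) ` Lambda_set n k \<subseteq> PiE {1..n} (\<lambda>_. {0..k})"
  proof clarify
    fix \<kappa> assume \<kappa>: "\<kappa> \<in> Lambda_set n k"
    have "\<kappa> j \<le> k" if "j \<in> {1..n}" for j
      using member_le_sum[of j "{1..n}" \<kappa>] that Lambda_setD(3)[OF \<kappa>] by simp
    then show "restrict \<kappa> {1..n} \<in> PiE {1..n} (\<lambda>_. {0..k})" by auto
  qed
  have fin: "finite (PiE {1..n} (\<lambda>_. {0..k}))" by (intro finite_PiE) auto
  show "finite (Lambda_set n k)"
    using finite_subset[OF sub fin] inj by (simp add: finite_image_iff)
  have "card (Lambda_set n k) \<le> card (PiE {1..n} (\<lambda>_. {0..k}))"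
    using card_mono[OF fin sub] card_image[OF inj] by simp
  then show "card (Lambda_set n k) \<le> (k + 1) ^ n"
    by (simp add: card_PiE)
qed

lemma card_Lambda_set_le_power: "real (card (Lambda_set n k)) \<le> (2 ^ n) ^ k"
proof -
  have "card (Lambda_set n k) \<le> (2 ^ k) ^ n"
    using card_Lambda_set_le[of n k] power_mono[of "k + 1" "2 ^ k" n]
    by (simp add: Suc_leI less_exp)
  then show ?thesis by (simp flip: power_mult add: mult.commute of_nat_le_iff)
qed

lemma Lambda_set_index_ge: "\<kappa> \<in> Lambda_set n k \<Longrightarrow> n - 1 \<le> k"
proof -
  assume \<kappa>: "\<kappa> \<in> Lambda_set n k"
  have "n - 1 = (\<Sum>j=2..n. (1::nat))" by simp
  also have "\<dots> \<le> (\<Sum>j=2..n. \<kappa> j)" by (rule sum_mono) (use Lambda_setD(2)[OF \<kappa>] in auto)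
  also have "\<dots> \<le> (\<Sum>j=1..n. \<kappa> j)" by (rule sum_mono2) auto
  finally show ?thesis using Lambda_setD(3)[OF \<kappa>] by simp
qed

definition incr_at :: "nat \<Rightarrow> (nat \<Rightarrow> nat) \<Rightarrow> nat \<Rightarrow> nat" where
  "incr_at n \<kappa> = \<kappa>(n := Suc (\<kappa> n))"

lemma inj_on_incr_at: "inj_on (incr_at n) A"
proof (rule inj_onI)
  fix \<kappa> \<kappa>' assume eq: "incr_at n \<kappa> = incr_at n \<kappa>'"
  show "\<kappa> = \<kappa>'"
  proof
    fix j show "\<kappa> j = \<kappa>' j"
      using fun_cong[OF eq, of j] by (cases "j = n") (auto simp: incr_at_def)
  qed
qed

lemma sum_incr_at: "n \<ge> 1 \<Longrightarrow> (\<Sum>j=1..n. incr_at n \<kappa> j) = Suc (\<Sum>j=1..n. \<kappa> j)"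
  unfolding incr_at_def
  using sum_atLeastAtMost_update_last[of n "\<lambda>_ x. x" \<kappa> "Suc (\<kappa> n)"] sum_atLeastAtMost_last[of n \<kappa>]
  by simp

lemma Lambda_set_Suc_eq:
  assumes "n \<ge> 1"
  shows "Lambda_set n (Suc k) =
           incr_at n ` Lambda_set n k \<union> (if n \<ge> 2 then incr_at n ` Lambda_set (n - 1) k else {})"
proof (intro equalityI subsetI)
  fix \<kappa> assume \<kappa>: "\<kappa> \<in> Lambda_set n (Suc k)"
  define \<kappa>' where "\<kappa>' = \<kappa>(n := \<kappa> n - 1)"
  have pos: "\<kappa> n \<ge> 1"
  proof (cases "n \<ge> 2")
    case True then show ?thesis using Lambda_setD(2)[OF \<kappa>, of n] by simp
  next
    case False
    with assms have "n = 1" by simp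
    then show ?thesis using Lambda_setD(3)[OF \<kappa>] by simp
  qed
  then have \<kappa>_eq: "\<kappa> = incr_at n \<kappa>'" by (auto simp: incr_at_def \<kappa>'_def)
  have sum\<kappa>': "(\<Sum>j=1..n. \<kappa>' j) = k"
    using sum_incr_at[OF assms, of \<kappa>'] Lambda_setD(3)[OF \<kappa>] \<kappa>_eq by simp
  show "\<kappa> \<in> incr_at n ` Lambda_set n k \<union> (if n \<ge> 2 then incr_at n ` Lambda_set (n - 1) k else {})"
  proof (cases "\<kappa> n \<ge> 2 \<or> n = 1")
    case True
    then have "\<kappa>' \<in> Lambda_set n k"
      using Lambda_setD(1,2)[OF \<kappa>] sum\<kappa>' by (auto simp: Lambda_set_def \<kappa>'_def)
    then show ?thesis using \<kappa>_eq by blast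
  next
    case False
    with pos assms have "\<kappa> n = 1" "n \<ge> 2" by auto
    moreover have "(\<Sum>j=1..n-1. \<kappa>' j) = k"
      using sum\<kappa>' sum_atLeastAtMost_last[OF assms, of \<kappa>'] \<open>\<kappa> n = 1\<close> by (simp add: \<kappa>'_def)
    ultimately have "\<kappa>' \<in> Lambda_set (n - 1) k"
      using Lambda_setD(1,2)[OF \<kappa>] by (auto simp: Lambda_set_def \<kappa>'_def)
    then show ?thesis using \<kappa>_eq \<open>n \<ge> 2\<close> by auto
  qed
next
  fix \<kappa> assume "\<kappa> \<in> incr_at n ` Lambda_set n k \<union> (if n \<ge> 2 then incr_at n ` Lambda_set (n - 1) k else {})"
  then consider \<kappa>' where "\<kappa>' \<in> Lambda_set n k" "\<kappa> = incr_at n \<kappa>'"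
    | \<kappa>' where "n \<ge> 2" "\<kappa>' \<in> Lambda_set (n - 1) k" "\<kappa> = incr_at n \<kappa>'"
    by (auto split: if_splits)
  then show "\<kappa> \<in> Lambda_set n (Suc k)"
  proof cases
    case 1
    then show ?thesis
      using assms Lambda_setD[OF 1(1)] sum_incr_at[OF assms, of \<kappa>'] by (auto simp: Lambda_set_def incr_at_def)
  next
    case 2
    have "(\<Sum>j=1..n. \<kappa>' j) = k"
      using sum_atLeastAtMost_last[OF assms, of \<kappa>'] Lambda_setD(1)[OF 2(2), of n] Lambda_setD(3)[OF 2(2)] assms
      by simp
    then show ?thesis
      using assms 2 Lambda_setD(1,2)[OF 2(2)] sum_incr_at[OF assms, of \<kappa>'] by (auto simp: Lambda_set_def incr_at_def)
  qed
qed

lemma sum_Lambda_set_Suc: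
  assumes "n \<ge> 1"
  shows "(\<Sum>\<kappa>\<in>Lambda_set n (Suc k). \<phi> \<kappa>) =
           (\<Sum>\<kappa>\<in>Lambda_set n k. \<phi> (incr_at n \<kappa>))
           + (if n \<ge> 2 then (\<Sum>\<kappa>\<in>Lambda_set (n - 1) k. \<phi> (incr_at n \<kappa>)) else 0)"
proof (cases "n \<ge> 2")
  case True
  have "incr_at n \<kappa> n \<ge> 2" if "\<kappa> \<in> Lambda_set n k" for \<kappa>
    using Lambda_setD(2)[OF that, of n] True by (simp add: incr_at_def)
  moreover have "incr_at n \<kappa> n = 1" if "\<kappa> \<in> Lambda_set (n - 1) k" for \<kappa>
    using Lambda_setD(1)[OF that, of n] True by (simp add: incr_at_def)
  ultimately have disj: "incr_at n ` Lambda_set n k \<inter> incr_at n ` Lambda_set (n - 1) k = {}"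
    by fastforce
  have "(\<Sum>\<kappa>\<in>Lambda_set n (Suc k). \<phi> \<kappa>) =
          (\<Sum>\<kappa>\<in>incr_at n ` Lambda_set n k. \<phi> \<kappa>) + (\<Sum>\<kappa>\<in>incr_at n ` Lambda_set (n - 1) k. \<phi> \<kappa>)"
    unfolding Lambda_set_Suc_eq[OF assms] using True disj
    by (simp add: sum.union_disjoint finite_Lambda_set)
  also have "\<dots> = (\<Sum>\<kappa>\<in>Lambda_set n k. \<phi> (incr_at n \<kappa>)) + (\<Sum>\<kappa>\<in>Lambda_set (n - 1) k. \<phi> (incr_at n \<kappa>))"
    by (simp add: sum.reindex[OF inj_on_incr_at])
  finally show ?thesis using True by simp
next
  case False
  then show ?thesis
    unfolding Lambda_set_Suc_eq[OF assms] by (simp add: sum.reindex[OF inj_on_incr_at])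
qed

section \<open>The series solution\<close>

definition fpb_coeff :: "(nat \<Rightarrow> real) \<Rightarrow> nat \<Rightarrow> (nat \<Rightarrow> nat) \<Rightarrow> real" where
  "fpb_coeff lam n \<kappa> = (-1) ^ (\<Sum>j=1..n. \<kappa> j) * (\<Prod>j=1..n. lam j ^ \<kappa> j)"

definition fpb_exponent :: "(nat \<Rightarrow> real) \<Rightarrow> nat \<Rightarrow> (nat \<Rightarrow> nat) \<Rightarrow> real" where
  "fpb_exponent nu n \<kappa> = (\<Sum>j=1..n. real (\<kappa> j) * nu j)"

lemma fpb_exponent_nonneg: "\<forall>j\<in>{1..n}. 0 \<le> nu j \<Longrightarrow> 0 \<le> fpb_exponent nu n \<kappa>"
  unfolding fpb_exponent_def by (intro sum_nonneg) auto

lemma fpb_term_eq: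
  "fpb_term lam nu n t =
     (\<lambda>m. \<Sum>\<kappa>\<in>Lambda_set n (m + (n - 1)). fpb_coeff lam n \<kappa> * frac_power (fpb_exponent nu n \<kappa>) t)"
  unfolding fpb_term_def fpb_inner_def sum_distrib_left
proof (intro ext sum.cong refl)
  fix m \<kappa> assume "\<kappa> \<in> Lambda_set n (m + (n - 1))"
  then have "(\<Sum>j=1..n. \<kappa> j) = m + (n - 1)" by (rule Lambda_setD(3))
  then show "(-1) ^ (m + (n - 1)) * (tpow t (\<Sum>j=1..n. real (\<kappa> j) * nu j) * (\<Prod>j=1..n. lam j ^ \<kappa> j)
              / Gamma (1 + (\<Sum>j=1..n. real (\<kappa> j) * nu j)))
           = fpb_coeff lam n \<kappa> * frac_power (fpb_exponent nu n \<kappa>) t"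
    by (simp add: fpb_coeff_def frac_power_def fpb_exponent_def)
qed
lemma abs_fpb_coeff_le:
  assumes \<kappa>: "\<kappa> \<in> Lambda_set n k" and L: "\<forall>j\<in>{1..n}. \<bar>lam j\<bar> \<le> L"
  shows "\<bar>fpb_coeff lam n \<kappa>\<bar> \<le> L ^ k"
proof -
  have "\<bar>fpb_coeff lam n \<kappa>\<bar> = (\<Prod>j=1..n. \<bar>lam j\<bar> ^ \<kappa> j)"
    by (simp add: fpb_coeff_def abs_mult abs_prod power_abs)
  also have "\<dots> \<le> (\<Prod>j=1..n. L ^ \<kappa> j)"
    using L by (intro prod_mono) (auto intro: power_mono)
  also have "\<dots> = L ^ k"
    using Lambda_setD(3)[OF \<kappa>] by (simp add: power_sum[symmetric])
  finally show ?thesis .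
qed

lemma fpb_exponent_bounds:
  assumes \<kappa>: "\<kappa> \<in> Lambda_set n k" and nu: "\<forall>j\<in>{1..n}. a \<le> nu j \<and> nu j \<le> 1"
  shows "a * real k \<le> fpb_exponent nu n \<kappa>" "fpb_exponent nu n \<kappa> \<le> real k"
proof -
  have k: "real k = (\<Sum>j=1..n. real (\<kappa> j))" using Lambda_setD(3)[OF \<kappa>] by (simp flip: of_nat_sum)
  show "a * real k \<le> fpb_exponent nu n \<kappa>"
    unfolding k fpb_exponent_def sum_distrib_left
    using nu by (intro sum_mono) (simp add: mult.commute mult_right_mono)
  show "fpb_exponent nu n \<kappa> \<le> real k"
    unfolding k fpb_exponent_def using nu by (intro sum_mono) (auto intro: mult_left_le)
qed

lemma fpb_abs_block_le:
  fixes lam nu :: "nat \<Rightarrow> real"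
  assumes L: "L \<ge> 0" "\<forall>j\<in>{1..n}. \<bar>lam j\<bar> \<le> L" and a: "a \<ge> 0" "\<forall>j\<in>{1..n}. a \<le> nu j \<and> nu j \<le> 1"
    and T: "T > 0" and R: "R \<ge> 1"
  shows "(\<Sum>\<kappa>\<in>Lambda_set n k. \<bar>fpb_coeff lam n \<kappa>\<bar> * frac_power (fpb_exponent nu n \<kappa>) T)
           \<le> exp (R + 1) * (2 ^ n * L * max 1 T / R powr a) ^ k"
proof -
  have "\<bar>fpb_coeff lam n \<kappa>\<bar> * frac_power (fpb_exponent nu n \<kappa>) T
          \<le> L ^ k * (exp (R + 1) * (max 1 T / R powr a) ^ k)" if \<kappa>: "\<kappa> \<in> Lambda_set n k" for \<kappa>
    using a fpb_exponent_bounds[OF \<kappa> a(2)] L T R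
    by (intro mult_mono abs_fpb_coeff_le[OF \<kappa>] frac_power_le_geometric frac_power_nonneg
        fpb_exponent_nonneg) auto
  then have "(\<Sum>\<kappa>\<in>Lambda_set n k. \<bar>fpb_coeff lam n \<kappa>\<bar> * frac_power (fpb_exponent nu n \<kappa>) T)
               \<le> real (card (Lambda_set n k)) * (L ^ k * (exp (R + 1) * (max 1 T / R powr a) ^ k))"
    by (rule sum_bounded_above)
  also have "\<dots> \<le> (2 ^ n) ^ k * (L ^ k * (exp (R + 1) * (max 1 T / R powr a) ^ k))"
    using L(1) R by (intro mult_right_mono card_Lambda_set_le_power) auto
  also have "\<dots> = exp (R + 1) * (2 ^ n * L * max 1 T / R powr a) ^ k"
    by (simp add: power_mult_distrib power_divide)
  finally show ?thesis .
qed

text \<open>Choosing \<open>R powr a = 2 ^ (n + 1) L max 1 T\<close> makes the blocks decay like \<open>2 ^ (- k)\<close>.\<close>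
lemma fpb_abs_summable:
  fixes lam nu :: "nat \<Rightarrow> real"
  assumes nu: "\<forall>j\<in>{1..n}. 0 < nu j \<and> nu j \<le> 1" and n: "n \<ge> 1" and T: "T > 0"
  shows "summable (\<lambda>k. \<Sum>\<kappa>\<in>Lambda_set n k. \<bar>fpb_coeff lam n \<kappa>\<bar> * frac_power (fpb_exponent nu n \<kappa>) T)"
proof -
  define L where "L = max 1 (Max ((\<lambda>j. \<bar>lam j\<bar>) ` {1..n}))"
  define a where "a = Min (nu ` {1..n})"
  define Q where "Q = 2 ^ (n + 1) * (max 1 T * L)"
  define R where "R = Q powr (1 / a)"
  have L: "L \<ge> 1" "\<forall>j\<in>{1..n}. \<bar>lam j\<bar> \<le> L" by (auto simp: L_def intro: le_max_iff_disj[THEN iffD2])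
  have a: "a > 0" "\<forall>j\<in>{1..n}. a \<le> nu j \<and> nu j \<le> 1"
    using n nu Min_in[of "nu ` {1..n}"] by (auto simp: a_def)
  have "1 * 1 \<le> max 1 T * L" using L by (intro mult_mono) auto
  moreover have "(1::real) \<le> 2 ^ (n + 1)" by (rule one_le_power) simp
  ultimately have Q: "Q \<ge> 1" unfolding Q_def using mult_mono[of 1 "2 ^ (n + 1)" 1 "max 1 T * L"] by simp
  have R: "R \<ge> 1" unfolding R_def using Q a by (intro ge_one_powr_ge_zero) auto
  have "2 ^ n * L * max 1 T / R powr a = 1 / 2"
    using Q a L unfolding R_def by (simp add: powr_powr Q_def)
  then have block: "(\<Sum>\<kappa>\<in>Lambda_set n k. \<bar>fpb_coeff lam n \<kappa>\<bar> * frac_power (fpb_exponent nu n \<kappa>) T)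
                      \<le> exp (R + 1) * (1 / 2) ^ k" for k
    using fpb_abs_block_le[of L n lam a nu T R k] L a T R by simp
  have nonneg: "0 \<le> (\<Sum>\<kappa>\<in>Lambda_set n k. \<bar>fpb_coeff lam n \<kappa>\<bar> * frac_power (fpb_exponent nu n \<kappa>) T)" for k
    using nu T by (intro sum_nonneg mult_nonneg_nonneg abs_ge_zero frac_power_nonneg fpb_exponent_nonneg) auto
  show ?thesis
  proof (rule summable_comparison_test)
    show "summable (\<lambda>k. exp (R + 1) * (1 / 2) ^ k)" by (intro summable_mult summable_geometric) simp
  qed (use block nonneg in auto)
qed
definition fpb_block :: "(nat \<Rightarrow> real) \<Rightarrow> (nat \<Rightarrow> real) \<Rightarrow> nat \<Rightarrow> nat \<Rightarrow> real \<Rightarrow> real" where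
  "fpb_block lam nu n k t =
     (\<Sum>\<kappa>\<in>Lambda_set n k. fpb_coeff lam n \<kappa> * frac_power (fpb_exponent nu n \<kappa>) t)"

definition fpb_caputo_block :: "(nat \<Rightarrow> real) \<Rightarrow> (nat \<Rightarrow> real) \<Rightarrow> nat \<Rightarrow> nat \<Rightarrow> real \<Rightarrow> real" where
  "fpb_caputo_block lam nu n k t =
     (\<Sum>\<kappa>\<in>Lambda_set n k. fpb_coeff lam n \<kappa> * caputo_frac_power (nu n) (fpb_exponent nu n \<kappa>) t)"

lemma fpb_coeff_incr_at: "n \<ge> 1 \<Longrightarrow> fpb_coeff lam n (incr_at n \<kappa>) = - lam n * fpb_coeff lam n \<kappa>"
  unfolding fpb_coeff_def sum_incr_at[of n \<kappa>]
  using prod_atLeastAtMost_update_last[of n "\<lambda>j x. lam j ^ x" \<kappa> "Suc (\<kappa> n)"]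
    prod_atLeastAtMost_update_last[of n "\<lambda>j x. lam j ^ x" \<kappa> "\<kappa> n"]
  by (simp add: incr_at_def mult_ac)

lemma fpb_exponent_incr_at: "n \<ge> 1 \<Longrightarrow> fpb_exponent nu n (incr_at n \<kappa>) = fpb_exponent nu n \<kappa> + nu n"
  unfolding fpb_exponent_def incr_at_def
  using sum_atLeastAtMost_update_last[of n "\<lambda>j x. real x * nu j" \<kappa> "Suc (\<kappa> n)"]
    sum_atLeastAtMost_update_last[of n "\<lambda>j x. real x * nu j" \<kappa> "\<kappa> n"]
  by (simp add: algebra_simps)

lemma fpb_coeff_drop_last: "n \<ge> 1 \<Longrightarrow> \<kappa> n = 0 \<Longrightarrow> fpb_coeff lam n \<kappa> = fpb_coeff lam (n - 1) \<kappa>"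
  using sum_atLeastAtMost_last[of n \<kappa>]
    prod_atLeastAtMost_update_last[of n "\<lambda>j x. lam j ^ x" \<kappa> 0]
  by (simp add: fpb_coeff_def fun_upd_idem)

lemma fpb_exponent_drop_last: "n \<ge> 1 \<Longrightarrow> \<kappa> n = 0 \<Longrightarrow> fpb_exponent nu n \<kappa> = fpb_exponent nu (n - 1) \<kappa>"
  using sum_atLeastAtMost_update_last[of n "\<lambda>j x. real x * nu j" \<kappa> 0]
  by (simp add: fpb_exponent_def fun_upd_idem)

lemma fpb_exponent_ge_last:
  assumes "n \<ge> 1" "\<kappa> n \<ge> 1" "\<forall>j\<in>{1..n}. 0 \<le> nu j"
  shows "nu n \<le> fpb_exponent nu n \<kappa>"
proof -
  have "nu n \<le> real (\<kappa> n) * nu n" using assms mult_right_mono[of 1 "real (\<kappa> n)" "nu n"] by auto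
  also have "\<dots> \<le> fpb_exponent nu n \<kappa>"
    unfolding fpb_exponent_def using assms by (intro member_le_sum) auto
  finally show ?thesis .
qed

lemma fpb_caputo_block_zero: "fpb_caputo_block lam nu n 0 t = 0"
proof -
  have "fpb_exponent nu n \<kappa> = 0" if "\<kappa> \<in> Lambda_set n 0" for \<kappa>
    using Lambda_setD(3)[OF that] by (simp add: fpb_exponent_def)
  then show ?thesis by (simp add: fpb_caputo_block_def caputo_frac_power_def)
qed

lemma fpb_block_eq_0: "k < n - 1 \<Longrightarrow> fpb_block lam nu n k t = 0"
  using Lambda_set_index_ge[of _ n k] by (fastforce simp: fpb_block_def intro: sum.neutral)

lemma fpb_term_eq_block: "fpb_term lam nu n t m = fpb_block lam nu n (m + (n - 1)) t"
  by (simp add: fpb_term_eq fpb_block_def)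

lemma fpb_term_at_0_eq_0:
  assumes "\<And>\<kappa>. \<kappa> \<in> Lambda_set n (m + (n - 1)) \<Longrightarrow> fpb_exponent nu n \<kappa> > 0"
  shows "fpb_term lam nu n 0 m = 0"
proof -
  have "fpb_exponent nu n \<kappa> \<noteq> 0" if "\<kappa> \<in> Lambda_set n (m + (n - 1))" for \<kappa>
    using assms[OF that] by simp
  then show ?thesis
    unfolding fpb_term_eq frac_power_zero by (intro sum.neutral) simp
qed

context
  fixes lam nu :: "nat \<Rightarrow> real"
  assumes lam_pos: "\<forall>n\<ge>1. 0 < lam n"
    and nu_range: "\<forall>n\<ge>1. 0 < nu n \<and> nu n \<le> 1"
begin

lemma nu_nonneg: "\<forall>j\<in>{1..n}. 0 \<le> nu j"
  using nu_range by auto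

lemma fpb_exponent_eq_0_or_ge:
  assumes n: "n \<ge> 1" and \<kappa>: "\<kappa> \<in> Lambda_set n k"
  shows "fpb_exponent nu n \<kappa> = 0 \<or> nu n \<le> fpb_exponent nu n \<kappa>"
proof (cases "\<kappa> n \<ge> 1")
  case True
  then show ?thesis using n nu_range by (intro disjI2 fpb_exponent_ge_last) auto
next
  case False
  moreover have "\<not> n \<ge> 2" using Lambda_setD(2)[OF \<kappa>, of n] False by auto
  ultimately have "n = 1" using n by auto
  with False show ?thesis by (simp add: fpb_exponent_def)
qed

lemma fpb_caputo_block_Suc:
  assumes n: "n \<ge> 1" and t: "t > 0"
  shows "fpb_caputo_block lam nu n (Suc k) t =
           - lam n * (fpb_block lam nu n k t + (if n \<ge> 2 then fpb_block lam nu (n - 1) k t else 0))"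
proof -
  have incr: "fpb_coeff lam n (incr_at n \<kappa>) * caputo_frac_power (nu n) (fpb_exponent nu n (incr_at n \<kappa>)) t
                = - lam n * (fpb_coeff lam n \<kappa> * frac_power (fpb_exponent nu n \<kappa>) t)" for \<kappa>
    using n t nu_range fpb_exponent_nonneg[OF nu_nonneg]
    by (simp add: fpb_coeff_incr_at fpb_exponent_incr_at caputo_frac_power_add_order)
  have drop: "fpb_coeff lam n \<kappa> * frac_power (fpb_exponent nu n \<kappa>) t
                = fpb_coeff lam (n - 1) \<kappa> * frac_power (fpb_exponent nu (n - 1) \<kappa>) t"
    if "n \<ge> 2" "\<kappa> \<in> Lambda_set (n - 1) k" for \<kappa>
    using that Lambda_setD(1)[OF that(2), of n] by (simp add: fpb_coeff_drop_last fpb_exponent_drop_last)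
  show ?thesis
    unfolding fpb_caputo_block_def sum_Lambda_set_Suc[OF n] incr
    by (simp add: fpb_block_def sum_distrib_left distrib_left sum_negf drop cong: sum.cong)
qed

lemma fpb_caputo_block_eq:
  assumes n: "n \<ge> 1" and t: "t > 0"
  shows "fpb_caputo_block lam nu n (m + (n - 1)) t =
           - lam n * ((if m = 0 then 0 else fpb_term lam nu n t (m - 1))
                      + (if n \<ge> 2 then fpb_term lam nu (n - 1) t m else 0))"
proof (cases "n \<ge> 2")
  case True
  then have "m + (n - 1) = Suc (m + (n - 2))" by simp
  moreover have "fpb_block lam nu n (m + (n - 2)) t = (if m = 0 then 0 else fpb_term lam nu n t (m - 1))"
  proof (cases m)
    case (Suc m')
    with True have index: "m + (n - 2) = m' + (n - 1)" by simp
    show ?thesis unfolding fpb_term_eq_block index using Suc by simp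
  qed (use True in \<open>simp add: fpb_block_eq_0\<close>)
  ultimately show ?thesis
    using True by (simp add: fpb_caputo_block_Suc[OF n t] fpb_term_eq_block numeral_2_eq_2)
next
  case False
  with n have "n = 1" by simp
  then show ?thesis
    by (cases m) (simp_all add: fpb_caputo_block_zero fpb_caputo_block_Suc t fpb_term_eq_block)
qed

lemma fpb_abs_summable_shifted:
  "n \<ge> 1 \<Longrightarrow> T > 0 \<Longrightarrow> summable (\<lambda>m. \<Sum>\<kappa>\<in>Lambda_set n (m + (n - 1)).
      \<bar>fpb_coeff lam n \<kappa>\<bar> * frac_power (fpb_exponent nu n \<kappa>) T)"
  using nu_range by (intro summable_ignore_initial_segment fpb_abs_summable) auto

lemma summable_fpb_term: "n \<ge> 1 \<Longrightarrow> t \<ge> 0 \<Longrightarrow> summable (fpb_term lam nu n t)"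
  unfolding fpb_term_eq
  by (rule summable_frac_power_series[OF finite_Lambda_set fpb_exponent_nonneg[OF nu_nonneg] fpb_abs_summable_shifted])

lemma fpb_sol_eq:
  "n \<ge> 1 \<Longrightarrow> fpb_sol lam nu n = (\<lambda>t. (-1) ^ (n - 1) * (lam 1 / lam n) * (\<Sum>m. fpb_term lam nu n t m))"
  by (simp add: fpb_sol_def fun_eq_iff)

lemma continuous_on_fpb_sol: "n \<ge> 1 \<Longrightarrow> continuous_on {0..} (fpb_sol lam nu n)"
  unfolding fpb_sol_eq fpb_term_eq
  by (intro continuous_intros continuous_on_frac_power_series[OF finite_Lambda_set fpb_exponent_nonneg[OF nu_nonneg]
        fpb_abs_summable_shifted])

lemma sums_fpb_caputo_block:
  assumes n: "n \<ge> 1" and t: "t > 0"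
  shows "(\<lambda>m. fpb_caputo_block lam nu n (m + (n - 1)) t) sums
           (- lam n * ((\<Sum>m. fpb_term lam nu n t m)
                       + (if n \<ge> 2 then (\<Sum>m. fpb_term lam nu (n - 1) t m) else 0)))"
proof -
  have "(\<lambda>m. if m = 0 then 0 else fpb_term lam nu n t (m - 1)) sums (\<Sum>m. fpb_term lam nu n t m)"
    using sums_Suc_iff[of "\<lambda>m. if m = 0 then 0 else fpb_term lam nu n t (m - 1)"]
      summable_sums[OF summable_fpb_term[OF n less_imp_le[OF t]]] by simp
  moreover have "(\<lambda>m. if n \<ge> 2 then fpb_term lam nu (n - 1) t m else 0)
                   sums (if n \<ge> 2 then (\<Sum>m. fpb_term lam nu (n - 1) t m) else 0)"
    using summable_sums[OF summable_fpb_term[of "n - 1" t]] t by auto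
  ultimately show ?thesis
    unfolding fpb_caputo_block_eq[OF n t] by (intro sums_mult sums_add)
qed

lemma fpb_sol_pred:
  assumes "n \<ge> 2"
  shows "lam (n - 1) * fpb_sol lam nu (n - 1) t
           = - lam n * ((-1) ^ (n - 1) * (lam 1 / lam n)) * (\<Sum>m. fpb_term lam nu (n - 1) t m)"
proof -
  obtain j where j: "n = Suc (Suc j)" using assms by (metis add_2_eq_Suc le_Suc_ex)
  have "lam n > 0" "lam (n - 1) > 0" using lam_pos assms by auto
  then show ?thesis unfolding j by (simp add: fpb_sol_def field_simps)
qed

lemma has_caputo_derivative_fpb_sol:
  assumes n: "n \<ge> 1" and t: "t > 0"
  shows "has_caputo_derivative (nu n) (fpb_sol lam nu n)
           (- lam n * fpb_sol lam nu n t + lam (n - 1) * fpb_sol lam nu (n - 1) t) t"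
proof -
  have "has_caputo_derivative (nu n) (\<lambda>t. \<Sum>m. fpb_term lam nu n t m)
          (\<Sum>m. fpb_caputo_block lam nu n (m + (n - 1)) t) t"
    unfolding fpb_term_eq fpb_caputo_block_def
    using n t nu_range fpb_exponent_eq_0_or_ge[OF n]
    by (intro has_caputo_derivative_frac_power_series[OF finite_Lambda_set fpb_exponent_nonneg[OF nu_nonneg]
          fpb_abs_summable_shifted[OF n], where ez = "nu n"]) auto
  then have "has_caputo_derivative (nu n) (fpb_sol lam nu n)
      ((-1) ^ (n - 1) * (lam 1 / lam n) * (- lam n * ((\<Sum>m. fpb_term lam nu n t m)
         + (if n \<ge> 2 then (\<Sum>m. fpb_term lam nu (n - 1) t m) else 0)))) t"
    unfolding fpb_sol_eq[OF n] sums_unique[OF sums_fpb_caputo_block[OF n t]]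
    by (rule has_caputo_derivative_cmult)
  moreover have "(-1) ^ (n - 1) * (lam 1 / lam n) * (- lam n * ((\<Sum>m. fpb_term lam nu n t m)
         + (if n \<ge> 2 then (\<Sum>m. fpb_term lam nu (n - 1) t m) else 0)))
      = - lam n * fpb_sol lam nu n t + lam (n - 1) * fpb_sol lam nu (n - 1) t"
  proof (cases "n \<ge> 2")
    case True
    then show ?thesis
      unfolding fpb_sol_pred[OF True] using n by (simp add: fpb_sol_def algebra_simps)
  next
    case False
    with n show ?thesis by (simp add: fpb_sol_def)
  qed
  ultimately show ?thesis by simp
qed

lemma fpb_sol_one_zero: "fpb_sol lam nu 1 0 = 1"
proof -
  have "Lambda_set 1 0 = {\<lambda>_. 0}"
  proof (intro equalityI subsetI)
    fix \<kappa> assume \<kappa>: "\<kappa> \<in> Lambda_set 1 0"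
    have "\<kappa> j = 0" for j
      using Lambda_setD(1)[OF \<kappa>, of j] Lambda_setD(3)[OF \<kappa>] by (cases "j = 1") auto
    then show "\<kappa> \<in> {\<lambda>_. 0}" by auto
  qed (auto simp: Lambda_set_def)
  then have "fpb_term lam nu 1 0 0 = 1"
    by (simp add: fpb_term_eq fpb_coeff_def fpb_exponent_def frac_power_zero)
  moreover have "fpb_term lam nu 1 0 m = 0" if "m > 0" for m
  proof -
    have "fpb_exponent nu 1 \<kappa> > 0" if "\<kappa> \<in> Lambda_set 1 m" for \<kappa>
      using Lambda_setD(3)[OF that] \<open>m > 0\<close> nu_range by (simp add: fpb_exponent_def)
    then show ?thesis by (intro fpb_term_at_0_eq_0) simp
  qed
  ultimately have "fpb_term lam nu 1 0 = (\<lambda>m. if m = 0 then 1 else 0)" by auto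
  moreover have "(\<lambda>m. if m = 0 then 1 else 0) sums (1::real)"
    using sums_single[of 0 "\<lambda>_. 1::real"] by simp
  moreover have "lam 1 > 0" using lam_pos by simp
  ultimately show ?thesis by (simp add: fpb_sol_def sums_iff)
qed

lemma fpb_sol_eq_0_at_0:
  assumes "n \<ge> 2"
  shows "fpb_sol lam nu n 0 = 0"
proof -
  have "fpb_exponent nu n \<kappa> > 0" if "\<kappa> \<in> Lambda_set n k" for \<kappa> k
  proof -
    have "\<kappa> n \<ge> 1" using Lambda_setD(2)[OF that, of n] assms by simp
    then have "nu n \<le> fpb_exponent nu n \<kappa>" using assms nu_range by (intro fpb_exponent_ge_last) auto
    moreover have "nu n > 0" using nu_range assms by simp
    ultimately show ?thesis by simp
  qed
  then have "fpb_term lam nu n 0 m = 0" for m by (intro fpb_term_at_0_eq_0)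
  then show ?thesis by (simp add: fpb_sol_def)
qed

end

theorem theorem5p1:
  fixes lam nu :: "nat \<Rightarrow> real"
  assumes lam_pos: "\<forall>n\<ge>1. 0 < lam n"
    and nu_range: "\<forall>n\<ge>1. 0 < nu n \<and> nu n \<le> 1"
  shows "(\<forall>n\<ge>1. \<forall>t\<ge>0. summable (fpb_term lam nu n t))
       \<and> (\<forall>n\<ge>1. continuous_on {0..} (fpb_sol lam nu n))
       \<and> (\<forall>t\<ge>0. fpb_sol lam nu 0 t = 0)
       \<and> fpb_sol lam nu 1 0 = 1
       \<and> (\<forall>n\<ge>2. fpb_sol lam nu n 0 = 0)
       \<and> (\<forall>n\<ge>1. \<forall>t>0. has_caputo_derivative (nu n) (fpb_sol lam nu n)
              (- lam n * fpb_sol lam nu n t + lam (n - 1) * fpb_sol lam nu (n - 1) t) t)"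
  using summable_fpb_term[OF assms] continuous_on_fpb_sol[OF assms] fpb_sol_one_zero[OF assms]
    fpb_sol_eq_0_at_0[OF assms] has_caputo_derivative_fpb_sol[OF assms]
  by (auto simp: fpb_sol_def)

end
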